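(* Let $d\ge1$, $\mu\in\mathbb{R}^d$, $\Sigma\in\mathbb{R}^{d\times d}$ symmetric positive definite, $\alpha>0$, $\delta\in(0,1)$, and $Z\sim\mathcal{N}(\mu,\Sigma)$. Consider the feasible set $$\{e\in\mathbb{R}^d:\ \mathbb{P}[Z^\top e\ge\alpha]\ge1-\delta\}$$ of the agent's problem $\min_e \mathrm{Cost}(e)$ subject to this constraint. The problem is feasible (the set is nonempty) when $\delta>\Phi\big(-\|\Sigma^{-1/2}\mu\|_2\big)$, and infeasible otherwise, where $\Phi$ is the standard normal CDF.
   Context: $Z$ plays the role of the agent's Gaussian belief about the vector $\mathbb{C}h$ of total feature contributions; $\alpha>0$ is the amount by which the agent's score falls short of the threshold (standing assumption in the paper), and $1-\delta$ is the required probability of passing the classifier. *)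

theory Defs
  imports "HOL-Probability.Probability"
begin

definition Phi :: "real \<Rightarrow> real" where
  "Phi x = measure (density lborel (\<lambda>t. ennreal (std_normal_density t))) {..x}"

definition sym_pos_def_mat :: "real^'n^'n \<Rightarrow> bool" where
  "sym_pos_def_mat S \<longleftrightarrow> transpose S = S \<and> (\<forall>x. x \<noteq> 0 \<longrightarrow> x \<bullet> (S *v x) > 0)"

definition mvn_density :: "real^'n \<Rightarrow> real^'n^'n \<Rightarrow> real^'n \<Rightarrow> real" where
  "mvn_density mu S x =
     exp (- ((x - mu) \<bullet> (matrix_inv S *v (x - mu))) / 2)
       / sqrt ((2 * pi) ^ CARD('n) * det S)"

text \<open>The Mahalanobis norm ||Sigma^(-1/2) mu||_2, written out: its square is mu^T Sigma^(-1) mu.\<close>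
definition inv_sqrt_norm :: "real^'n^'n \<Rightarrow> real^'n \<Rightarrow> real" where
  "inv_sqrt_norm S mu = sqrt (mu \<bullet> (matrix_inv S *v mu))"

end

(*
  For e \<noteq> 0 the scalar e \<bullet> Z is normal with mean mu \<bullet> e and variance e \<bullet> Sigma e, so
  P[Z \<bullet> e \<ge> alpha] = 1 - Phi t(e) with t(e) = (alpha - mu \<bullet> e) / sqrt (e \<bullet> Sigma e), while e = 0
  is never feasible because alpha > 0. By Cauchy-Schwarz for the inner product given by Sigma,
  |mu \<bullet> e| \<le> m sqrt (e \<bullet> Sigma e) with m = ||Sigma^(-1/2) mu||, so t(e) > -m, with equality
  approached along e = l Sigma^(-1) mu as l \<rightarrow> \<infinity>. As Phi is strictly increasing and right
  continuous, some e satisfies Phi t(e) \<le> delta iff Phi(-m) < delta.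

  The law of e \<bullet> Z is computed without a multivariate change of variables: the quadratic form
  y \<bullet> Sigma^(-1) y splits into (y \<bullet> e)^2 / (e \<bullet> Sigma e) plus a term constant along a line,
  and shears, which preserve Lebesgue measure, turn the integral into an iterated one along
  such lines.
*)

theory Submission
  imports Defs
begin

section \<open>Shears and iterated integrals of Lebesgue measure\<close>

lemma nn_integral_lborel_fibres_Basis:
  fixes G :: "'a::euclidean_space \<Rightarrow> ennreal" and b :: 'a
  assumes G[measurable]: "G \<in> borel_measurable borel" and b: "b \<in> Basis"
  shows "(\<integral>\<^sup>+y. G y \<partial>lborel) =
    (\<integral>\<^sup>+f. (\<integral>\<^sup>+r. G ((\<Sum>c\<in>Basis-{b}. f c *\<^sub>R c) + r *\<^sub>R b) \<partial>lborel) \<partial>(\<Pi>\<^sub>M c\<in>Basis-{b}. lborel))"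
proof -
  interpret product_sigma_finite "\<lambda>_::'a. lborel::real measure"
    by standard
  have Basis: "Basis = insert b (Basis - {b})" using b by auto
  have split: "(\<Sum>c\<in>Basis. (f(b:=r)) c *\<^sub>R c) = (\<Sum>c\<in>Basis-{b}. f c *\<^sub>R c) + r *\<^sub>R b"
    for f :: "'a \<Rightarrow> real" and r
  proof -
    have "(\<Sum>c\<in>Basis. (f(b:=r)) c *\<^sub>R c) = r *\<^sub>R b + (\<Sum>c\<in>Basis-{b}. (f(b:=r)) c *\<^sub>R c)"
      using b by (simp add: sum.remove)
    also have "(\<Sum>c\<in>Basis-{b}. (f(b:=r)) c *\<^sub>R c) = (\<Sum>c\<in>Basis-{b}. f c *\<^sub>R c)"
      by (intro sum.cong) auto
    finally show ?thesis by (simp add: add.commute)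
  qed
  have "(\<integral>\<^sup>+y. G y \<partial>lborel) = (\<integral>\<^sup>+f. G (\<Sum>c\<in>Basis. f c *\<^sub>R c) \<partial>(\<Pi>\<^sub>M c\<in>Basis. lborel))"
    by (subst lborel_eq) (simp add: nn_integral_distr)
  also have "\<dots> = (\<integral>\<^sup>+f. G (\<Sum>c\<in>Basis. f c *\<^sub>R c) \<partial>(\<Pi>\<^sub>M c\<in>insert b (Basis-{b}). lborel))"
    using Basis by simp
  also have "\<dots> = (\<integral>\<^sup>+f. (\<integral>\<^sup>+r. G (\<Sum>c\<in>Basis. (f(b:=r)) c *\<^sub>R c) \<partial>lborel) \<partial>(\<Pi>\<^sub>M c\<in>Basis-{b}. lborel))"
    by (subst product_nn_integral_insert) (use Basis in auto)
  finally show ?thesis by (simp only: split)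
qed

lemma nn_integral_lborel_shear_Basis:
  fixes G :: "'a::euclidean_space \<Rightarrow> ennreal" and a b :: 'a
  assumes G[measurable]: "G \<in> borel_measurable borel" and a: "a \<in> Basis" and b: "b \<in> Basis"
    and "a \<noteq> b"
  shows "(\<integral>\<^sup>+y. G (y + (c * (y \<bullet> a)) *\<^sub>R b) \<partial>lborel) = (\<integral>\<^sup>+y. G y \<partial>lborel)"
proof -
  have ba: "b \<bullet> a = 0" using a b \<open>a \<noteq> b\<close> by (simp add: inner_Basis)
  have fibre: "(\<integral>\<^sup>+r. G (v + r *\<^sub>R b + (c * ((v + r *\<^sub>R b) \<bullet> a)) *\<^sub>R b) \<partial>lborel)
      = (\<integral>\<^sup>+r. G (v + r *\<^sub>R b) \<partial>lborel)" for v
  proof -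
    have shift: "v + r *\<^sub>R b + (c * ((v + r *\<^sub>R b) \<bullet> a)) *\<^sub>R b = v + (c * (v \<bullet> a) + 1 * r) *\<^sub>R b" for r
      using ba by (simp add: algebra_simps)
    have "(\<integral>\<^sup>+r. G (v + r *\<^sub>R b) \<partial>lborel)
        = ennreal \<bar>1\<bar> * (\<integral>\<^sup>+r. G (v + (c * (v \<bullet> a) + 1 * r) *\<^sub>R b) \<partial>lborel)"
      by (rule nn_integral_real_affine) auto
    then show ?thesis unfolding shift by simp
  qed
  have "(\<integral>\<^sup>+y. G (y + (c * (y \<bullet> a)) *\<^sub>R b) \<partial>lborel) =
    (\<integral>\<^sup>+f. (\<integral>\<^sup>+r. G (((\<Sum>d\<in>Basis-{b}. f d *\<^sub>R d) + r *\<^sub>R b)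
       + (c * (((\<Sum>d\<in>Basis-{b}. f d *\<^sub>R d) + r *\<^sub>R b) \<bullet> a)) *\<^sub>R b) \<partial>lborel) \<partial>(\<Pi>\<^sub>M d\<in>Basis-{b}. lborel))"
    using nn_integral_lborel_fibres_Basis[OF _ b, of "\<lambda>y. G (y + (c * (y \<bullet> a)) *\<^sub>R b)"] by simp
  also have "\<dots> = (\<integral>\<^sup>+f. (\<integral>\<^sup>+r. G ((\<Sum>d\<in>Basis-{b}. f d *\<^sub>R d) + r *\<^sub>R b) \<partial>lborel) \<partial>(\<Pi>\<^sub>M d\<in>Basis-{b}. lborel))"
    by (simp only: fibre)
  also have "\<dots> = (\<integral>\<^sup>+y. G y \<partial>lborel)"
    by (rule nn_integral_lborel_fibres_Basis[OF G b, symmetric])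
  finally show ?thesis .
qed

text \<open>A general shear is a composition of the elementary ones along the basis vectors orthogonal
  to \<open>b\<close>.\<close>

lemma nn_integral_lborel_shear:
  fixes b w :: "'a::euclidean_space" and G :: "'a \<Rightarrow> ennreal"
  assumes b: "b \<in> Basis" and "w \<bullet> b = 0" and G: "G \<in> borel_measurable borel"
  shows "(\<integral>\<^sup>+y. G (y + (y \<bullet> b) *\<^sub>R w) \<partial>lborel) = (\<integral>\<^sup>+y. G y \<partial>lborel)"
proof -
  have partial_shear: "(\<integral>\<^sup>+y. G (y + (y \<bullet> b) *\<^sub>R (\<Sum>a\<in>J. (w \<bullet> a) *\<^sub>R a)) \<partial>lborel) = (\<integral>\<^sup>+y. G y \<partial>lborel)"
    if "finite J" "J \<subseteq> Basis - {b}" "G \<in> borel_measurable borel" for J and G :: "'a \<Rightarrow> ennreal"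
    using that
  proof (induction J arbitrary: G rule: finite_induct)
    case empty
    then show ?case by simp
  next
    case (insert a J)
    note G[measurable] = insert.prems(2)
    define E where "E = (\<lambda>z. z + ((w \<bullet> a) * (z \<bullet> b)) *\<^sub>R a)"
    have [measurable]: "(\<lambda>z. G (E z)) \<in> borel_measurable borel" unfolding E_def by measurable
    have "(\<Sum>a\<in>J. (w \<bullet> a) *\<^sub>R a) \<bullet> b = 0"
      using insert.prems b by (auto simp: inner_sum_left inner_Basis subset_iff intro!: sum.neutral)
    then have "y + (y \<bullet> b) *\<^sub>R (\<Sum>a\<in>insert a J. (w \<bullet> a) *\<^sub>R a)
        = E (y + (y \<bullet> b) *\<^sub>R (\<Sum>a\<in>J. (w \<bullet> a) *\<^sub>R a))" for y
      using insert.hyps by (simp add: E_def algebra_simps)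
    then have "(\<integral>\<^sup>+y. G (y + (y \<bullet> b) *\<^sub>R (\<Sum>a\<in>insert a J. (w \<bullet> a) *\<^sub>R a)) \<partial>lborel)
        = (\<integral>\<^sup>+y. G (E (y + (y \<bullet> b) *\<^sub>R (\<Sum>a\<in>J. (w \<bullet> a) *\<^sub>R a))) \<partial>lborel)"
      by simp
    also have "\<dots> = (\<integral>\<^sup>+y. G (E y) \<partial>lborel)"
      using insert.IH[of "\<lambda>z. G (E z)"] insert.prems by simp
    also have "\<dots> = (\<integral>\<^sup>+y. G y \<partial>lborel)"
      unfolding E_def using insert.prems b
      by (intro nn_integral_lborel_shear_Basis) auto
    finally show ?case .
  qed
  have "w = (\<Sum>a\<in>Basis. (w \<bullet> a) *\<^sub>R a)" by (simp add: euclidean_representation)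
  also have "\<dots> = (w \<bullet> b) *\<^sub>R b + (\<Sum>a\<in>Basis-{b}. (w \<bullet> a) *\<^sub>R a)"
    using b by (simp add: sum.remove)
  finally have "w = (\<Sum>a\<in>Basis-{b}. (w \<bullet> a) *\<^sub>R a)" using \<open>w \<bullet> b = 0\<close> by simp
  then show ?thesis using partial_shear[OF _ _ G, of "Basis - {b}"] by simp
qed

lemma nn_integral_lborel_fibres:
  fixes G :: "'a::euclidean_space \<Rightarrow> ennreal" and b d :: 'a
  assumes G[measurable]: "G \<in> borel_measurable borel" and b: "b \<in> Basis" and "d \<bullet> b = 1"
  shows "(\<integral>\<^sup>+y. G y \<partial>lborel) =
    (\<integral>\<^sup>+f. (\<integral>\<^sup>+r. G ((\<Sum>c\<in>Basis-{b}. f c *\<^sub>R c) + r *\<^sub>R d) \<partial>lborel) \<partial>(\<Pi>\<^sub>M c\<in>Basis-{b}. lborel))"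
proof -
  have "(\<Sum>c\<in>Basis-{b}. f c *\<^sub>R c) \<bullet> b = 0" for f :: "'a \<Rightarrow> real"
    using b by (auto simp: inner_sum_left inner_Basis intro!: sum.neutral)
  then have shear_fibre: "((\<Sum>c\<in>Basis-{b}. f c *\<^sub>R c) + r *\<^sub>R b)
      + (((\<Sum>c\<in>Basis-{b}. f c *\<^sub>R c) + r *\<^sub>R b) \<bullet> b) *\<^sub>R (d - b)
      = (\<Sum>c\<in>Basis-{b}. f c *\<^sub>R c) + r *\<^sub>R d" for f r
    using b by (simp add: inner_add_left algebra_simps)
  have "(d - b) \<bullet> b = 0" using \<open>d \<bullet> b = 1\<close> b by (simp add: inner_diff_left)
  then have "(\<integral>\<^sup>+y. G y \<partial>lborel) = (\<integral>\<^sup>+y. G (y + (y \<bullet> b) *\<^sub>R (d - b)) \<partial>lborel)"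
    by (rule nn_integral_lborel_shear[OF b _ G, symmetric])
  also have "\<dots> = (\<integral>\<^sup>+f. (\<integral>\<^sup>+r. G (((\<Sum>c\<in>Basis-{b}. f c *\<^sub>R c) + r *\<^sub>R b)
      + (((\<Sum>c\<in>Basis-{b}. f c *\<^sub>R c) + r *\<^sub>R b) \<bullet> b) *\<^sub>R (d - b)) \<partial>lborel) \<partial>(\<Pi>\<^sub>M c\<in>Basis-{b}. lborel))"
    using nn_integral_lborel_fibres_Basis[OF _ b, of "\<lambda>y. G (y + (y \<bullet> b) *\<^sub>R (d - b))"] by simp
  finally show ?thesis by (simp only: shear_fibre)
qed

lemma nn_integral_exp_quadratic_line:
  fixes Q :: "'a::euclidean_space \<Rightarrow> real" and e u v :: 'a and c x :: real
    and \<phi> :: "real \<Rightarrow> ennreal"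
  assumes split: "\<And>y. Q y = c * (y \<bullet> e)^2 + Q (y - (y \<bullet> e) *\<^sub>R u)"
    and "u \<bullet> e = 1" and "x \<noteq> 0" and [measurable]: "\<phi> \<in> borel_measurable borel"
  shows "(\<integral>\<^sup>+r. ennreal (exp (- Q (v + (x * r) *\<^sub>R u) / 2)) * \<phi> ((v + (x * r) *\<^sub>R u) \<bullet> e) \<partial>lborel)
    = ennreal (exp (- Q (v - (v \<bullet> e) *\<^sub>R u) / 2))
      * (ennreal \<bar>1 / x\<bar> * (\<integral>\<^sup>+t. ennreal (exp (- c * t^2 / 2)) * \<phi> t \<partial>lborel))"
proof -
  define \<psi> where "\<psi> = (\<lambda>t. ennreal (exp (- c * t^2 / 2)) * \<phi> t)"
  have [measurable]: "\<psi> \<in> borel_measurable borel" unfolding \<psi>_def by measurable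
  define g where "g = ennreal (exp (- Q (v - (v \<bullet> e) *\<^sub>R u) / 2))"
  have integrand: "ennreal (exp (- Q (v + (x * r) *\<^sub>R u) / 2)) * \<phi> ((v + (x * r) *\<^sub>R u) \<bullet> e)
      = g * \<psi> (v \<bullet> e + x * r)" for r
  proof -
    have t: "(v + (x * r) *\<^sub>R u) \<bullet> e = v \<bullet> e + x * r"
      using \<open>u \<bullet> e = 1\<close> by (simp add: inner_add_left)
    have "Q (v + (x * r) *\<^sub>R u) = c * (v \<bullet> e + x * r)^2 + Q (v - (v \<bullet> e) *\<^sub>R u)"
      using split[of "v + (x * r) *\<^sub>R u"] unfolding t by (simp add: algebra_simps)
    then have "exp (- Q (v + (x * r) *\<^sub>R u) / 2)
        = exp (- Q (v - (v \<bullet> e) *\<^sub>R u) / 2) * exp (- c * (v \<bullet> e + x * r)^2 / 2)"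
      by (simp add: exp_add[symmetric] field_simps)
    then show ?thesis
      unfolding g_def \<psi>_def t by (simp add: ennreal_mult mult.assoc)
  qed
  have "(\<integral>\<^sup>+t. \<psi> t \<partial>lborel) = ennreal \<bar>x\<bar> * (\<integral>\<^sup>+r. \<psi> (v \<bullet> e + x * r) \<partial>lborel)"
    using \<open>x \<noteq> 0\<close> by (intro nn_integral_real_affine) auto
  then have "(\<integral>\<^sup>+r. \<psi> (v \<bullet> e + x * r) \<partial>lborel) = ennreal \<bar>1 / x\<bar> * (\<integral>\<^sup>+t. \<psi> t \<partial>lborel)"
    using \<open>x \<noteq> 0\<close> by (simp add: ennreal_mult[symmetric] mult.assoc[symmetric] abs_mult[symmetric])
  moreover have "(\<integral>\<^sup>+r. g * \<psi> (v \<bullet> e + x * r) \<partial>lborel) = g * (\<integral>\<^sup>+r. \<psi> (v \<bullet> e + x * r) \<partial>lborel)"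
    by (rule nn_integral_cmult) measurable
  ultimately show ?thesis
    unfolding integrand by (simp add: g_def \<psi>_def)
qed

text \<open>Lebesgue measure is integrated along lines parallel to \<open>u\<close>, on which
  \<open>y - (y \<bullet> e) *\<^sub>R u\<close> is constant.\<close>

lemma nn_integral_exp_quadratic_marginal:
  fixes Q :: "'a::euclidean_space \<Rightarrow> real" and e u :: 'a and c :: real
  assumes [measurable]: "Q \<in> borel_measurable borel"
    and split: "\<And>y. Q y = c * (y \<bullet> e)^2 + Q (y - (y \<bullet> e) *\<^sub>R u)"
    and ue: "u \<bullet> e = 1"
  shows "\<exists>C. \<forall>\<phi>::real\<Rightarrow>ennreal. \<phi> \<in> borel_measurable borel \<longrightarrow>
     (\<integral>\<^sup>+y. ennreal (exp (- Q y / 2)) * \<phi> (y \<bullet> e) \<partial>lborel)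
       = C * (\<integral>\<^sup>+t. ennreal (exp (- c * t^2 / 2)) * \<phi> t \<partial>lborel)"
proof -
  have "u \<noteq> 0" using ue by auto
  then obtain b where b: "b \<in> Basis" and "u \<bullet> b \<noteq> 0"
    using euclidean_all_zero_iff by blast
  define x where "x = 1 / (u \<bullet> b)"
  have "x \<noteq> 0" "(x *\<^sub>R u) \<bullet> b = 1" using \<open>u \<bullet> b \<noteq> 0\<close> by (simp_all add: x_def)
  define g where "g = (\<lambda>v. ennreal (exp (- Q (v - (v \<bullet> e) *\<^sub>R u) / 2)))"
  have [measurable]: "(\<lambda>f. g (\<Sum>c\<in>Basis-{b}. f c *\<^sub>R c)) \<in> borel_measurable (\<Pi>\<^sub>M c\<in>Basis-{b}. lborel)"
    unfolding g_def by measurable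
  define C where "C = ennreal \<bar>1 / x\<bar> * (\<integral>\<^sup>+f. g (\<Sum>c\<in>Basis-{b}. f c *\<^sub>R c) \<partial>(\<Pi>\<^sub>M c\<in>Basis-{b}. lborel))"
  show ?thesis
  proof (intro exI allI impI)
    fix \<phi> :: "real \<Rightarrow> ennreal" assume \<phi>[measurable]: "\<phi> \<in> borel_measurable borel"
    let ?I = "\<integral>\<^sup>+t. ennreal (exp (- c * t^2 / 2)) * \<phi> t \<partial>lborel"
    have "(\<integral>\<^sup>+y. ennreal (exp (- Q y / 2)) * \<phi> (y \<bullet> e) \<partial>lborel)
       = (\<integral>\<^sup>+f. (\<integral>\<^sup>+r. ennreal (exp (- Q ((\<Sum>c\<in>Basis-{b}. f c *\<^sub>R c) + (x * r) *\<^sub>R u) / 2))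
           * \<phi> (((\<Sum>c\<in>Basis-{b}. f c *\<^sub>R c) + (x * r) *\<^sub>R u) \<bullet> e) \<partial>lborel) \<partial>(\<Pi>\<^sub>M c\<in>Basis-{b}. lborel))"
      using nn_integral_lborel_fibres[OF _ b \<open>(x *\<^sub>R u) \<bullet> b = 1\<close>] by (simp add: ac_simps)
    also have "\<dots> = (\<integral>\<^sup>+f. g (\<Sum>c\<in>Basis-{b}. f c *\<^sub>R c) * (ennreal \<bar>1 / x\<bar> * ?I) \<partial>(\<Pi>\<^sub>M c\<in>Basis-{b}. lborel))"
      unfolding g_def by (simp only: nn_integral_exp_quadratic_line[OF split ue \<open>x \<noteq> 0\<close> \<phi>])
    also have "\<dots> = C * ?I"
      unfolding C_def by (subst nn_integral_multc) (simp_all add: mult_ac)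
    finally show "(\<integral>\<^sup>+y. ennreal (exp (- Q y / 2)) * \<phi> (y \<bullet> e) \<partial>lborel) = C * ?I" .
  qed
qed

section \<open>Symmetric positive definite matrices\<close>

lemma sym_pos_def_mat_symmetric:
  fixes S :: "real^'n^'n"
  assumes "sym_pos_def_mat S"
  shows "x \<bullet> (S *v y) = y \<bullet> (S *v x)"
proof -
  have "x \<bullet> (S *v y) = (transpose S *v x) \<bullet> y" by (simp add: dot_lmul_matrix)
  also have "\<dots> = y \<bullet> (S *v x)" using assms by (simp add: sym_pos_def_mat_def inner_commute)
  finally show ?thesis .
qed

lemma sym_pos_def_mat_pos: "sym_pos_def_mat S \<Longrightarrow> x \<noteq> 0 \<Longrightarrow> x \<bullet> (S *v x) > 0"
  by (simp add: sym_pos_def_mat_def)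

lemma sym_pos_def_mat_nonneg: "sym_pos_def_mat S \<Longrightarrow> x \<bullet> (S *v x) \<ge> 0"
  by (cases "x = 0") (auto dest: sym_pos_def_mat_pos[of S x])

lemma sym_pos_def_mat_matrix_inv:
  fixes S :: "real^'n^'n"
  assumes "sym_pos_def_mat S"
  shows "S *v (matrix_inv S *v x) = x" "matrix_inv S *v (S *v x) = x"
proof -
  have "\<forall>x. S *v x = 0 \<longrightarrow> x = 0"
    using sym_pos_def_mat_pos[OF assms] by (metis inner_zero_right less_irrefl)
  then have "invertible S"
    using invertible_left_inverse matrix_left_invertible_ker by blast
  then have "S ** matrix_inv S = mat 1 \<and> matrix_inv S ** S = mat 1"
    unfolding invertible_def matrix_inv_def by (rule someI_ex)
  then show "S *v (matrix_inv S *v x) = x" "matrix_inv S *v (S *v x) = x"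
    by (simp_all add: matrix_vector_mul_assoc)
qed

lemma sym_pos_def_mat_inv_symmetric:
  fixes S :: "real^'n^'n"
  assumes "sym_pos_def_mat S"
  shows "x \<bullet> (matrix_inv S *v y) = y \<bullet> (matrix_inv S *v x)"
proof -
  let ?P = "matrix_inv S"
  have "x \<bullet> (?P *v y) = (S *v (?P *v x)) \<bullet> (?P *v y)"
    by (simp add: sym_pos_def_mat_matrix_inv[OF assms])
  also have "\<dots> = (?P *v x) \<bullet> (S *v (?P *v y))"
    using sym_pos_def_mat_symmetric[OF assms] by (simp add: inner_commute)
  also have "\<dots> = y \<bullet> (?P *v x)"
    by (simp add: sym_pos_def_mat_matrix_inv[OF assms] inner_commute)
  finally show ?thesis .
qed

lemma sym_pos_def_mat_inv_nonneg:
  fixes S :: "real^'n^'n"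
  assumes "sym_pos_def_mat S"
  shows "x \<bullet> (matrix_inv S *v x) \<ge> 0"
  using sym_pos_def_mat_nonneg[OF assms, of "matrix_inv S *v x"]
  by (simp add: sym_pos_def_mat_matrix_inv[OF assms] inner_commute)

lemma sym_pos_def_mat_cauchy_schwarz:
  fixes S :: "real^'n^'n"
  assumes S: "sym_pos_def_mat S"
  shows "(a \<bullet> (S *v e))^2 \<le> (a \<bullet> (S *v a)) * (e \<bullet> (S *v e))"
proof (cases "e = 0")
  case True
  then show ?thesis by simp
next
  case False
  define s where "s = e \<bullet> (S *v e)"
  have "s > 0" unfolding s_def using sym_pos_def_mat_pos[OF S False] .
  define l where "l = (a \<bullet> (S *v e)) / s"
  have "0 \<le> (a - l *\<^sub>R e) \<bullet> (S *v (a - l *\<^sub>R e))" by (rule sym_pos_def_mat_nonneg[OF S])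
  also have "\<dots> = a \<bullet> (S *v a) - 2 * l * (a \<bullet> (S *v e)) + l^2 * s"
    unfolding s_def using sym_pos_def_mat_symmetric[OF S, of e a]
    by (simp add: matrix_vector_mult_diff_distrib matrix_vector_mult_scaleR inner_diff_left
        inner_diff_right power2_eq_square algebra_simps)
  also have "\<dots> = a \<bullet> (S *v a) - (a \<bullet> (S *v e))^2 / s"
    unfolding l_def using \<open>s > 0\<close> by (simp add: field_simps power2_eq_square)
  finally show ?thesis using \<open>s > 0\<close> unfolding s_def by (simp add: divide_le_eq)
qed

text \<open>With \<open>u = S e / (e \<bullet> S e)\<close>, the map \<open>y \<mapsto> y - (y \<bullet> e) u\<close> is the projection onto
  \<open>e\<^sup>\<bottom>\<close> along \<open>u\<close>, and the two summands are orthogonal for the inner product \<open>matrix_inv S\<close>.\<close>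

lemma inv_quadratic_form_split:
  fixes S :: "real^'n^'n" and e :: "real^'n"
  assumes S: "sym_pos_def_mat S" and e: "e \<noteq> 0"
  defines "s \<equiv> e \<bullet> (S *v e)"
  defines "u \<equiv> (1/s) *\<^sub>R (S *v e)"
  shows "u \<bullet> e = 1"
    and "y \<bullet> (matrix_inv S *v y)
      = (1/s) * (y \<bullet> e)^2 + (y - (y \<bullet> e) *\<^sub>R u) \<bullet> (matrix_inv S *v (y - (y \<bullet> e) *\<^sub>R u))"
proof -
  let ?P = "matrix_inv S"
  have "s > 0" unfolding s_def using sym_pos_def_mat_pos[OF S e] .
  then show ue: "u \<bullet> e = 1" unfolding u_def s_def by (simp add: inner_commute)
  have Pu: "?P *v u = (1/s) *\<^sub>R e"
    unfolding u_def by (simp add: matrix_vector_mult_scaleR sym_pos_def_mat_matrix_inv[OF S])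
  define t where "t = y \<bullet> e"
  define w where "w = y - t *\<^sub>R u"
  have y: "y = w + t *\<^sub>R u" unfolding w_def by simp
  have "w \<bullet> e = 0" unfolding w_def t_def using ue by (simp add: inner_diff_left)
  have "y \<bullet> (?P *v y) = w \<bullet> (?P *v w) + 2 * t * (w \<bullet> (?P *v u)) + t^2 * (u \<bullet> (?P *v u))"
    unfolding y using sym_pos_def_mat_inv_symmetric[OF S, of u w]
    by (simp add: matrix_vector_right_distrib matrix_vector_mult_scaleR inner_add_left
        inner_add_right power2_eq_square algebra_simps)
  also have "\<dots> = w \<bullet> (?P *v w) + t^2 / s"
    using \<open>w \<bullet> e = 0\<close> ue by (simp add: Pu)
  finally show "y \<bullet> (?P *v y) = (1/s) * (y \<bullet> e)^2 + (y - (y \<bullet> e) *\<^sub>R u) \<bullet> (?P *v (y - (y \<bullet> e) *\<^sub>R u))"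
    unfolding w_def t_def by simp
qed

section \<open>The standard normal distribution function\<close>

abbreviation std_normal_measure :: "real measure" where
  "std_normal_measure \<equiv> density lborel (\<lambda>t. ennreal (std_normal_density t))"

lemma real_distribution_std_normal_measure: "real_distribution std_normal_measure"
proof -
  interpret prob_space std_normal_measure
    using prob_space_normal_density by simp
  show ?thesis by standard simp
qed

interpretation std_normal: real_distribution std_normal_measure
  by (rule real_distribution_std_normal_measure)

lemma Phi_eq_cdf: "Phi = cdf std_normal_measure"
  by (simp add: fun_eq_iff Phi_def cdf_def)

lemma measure_std_normal_atLeast: "measure std_normal_measure {t..} = 1 - Phi t"
proof -
  have "{t} \<in> null_sets std_normal_measure"
    by (simp add: null_sets_def emeasure_density)
  then have "measure std_normal_measure ({..<t} \<union> {t}) = measure std_normal_measure {..<t}"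
    by (intro measure_Un_null_set) simp_all
  moreover have "{..<t} \<union> {t} = {..t}" by auto
  moreover have "measure std_normal_measure {t..} = 1 - measure std_normal_measure {..<t}"
    using std_normal.prob_compl[of "{..<t}"] by (simp add: Compl_eq_Diff_UNIV[symmetric])
  ultimately show ?thesis by (simp add: Phi_def)
qed

lemma Phi_strict_mono: "strict_mono Phi"
proof
  fix x y :: real
  assume "x < y"
  define m where "m = std_normal_density (\<bar>x\<bar> + \<bar>y\<bar>)"
  have "m > 0" unfolding m_def by (simp add: std_normal_density_def)
  have m_le: "m \<le> std_normal_density z" if "x < z" "z \<le> y" for z
  proof -
    have "\<bar>z\<bar> \<le> \<bar>x\<bar> + \<bar>y\<bar>" using that by auto
    then have "z^2 \<le> (\<bar>x\<bar> + \<bar>y\<bar>)^2"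
      by (metis abs_ge_zero power2_abs power_mono)
    then show ?thesis unfolding m_def std_normal_density_def by (intro mult_left_mono) auto
  qed
  have "ennreal (m * (y - x)) = (\<integral>\<^sup>+z. ennreal m * indicator {x<..y} z \<partial>lborel)"
    using \<open>x < y\<close> \<open>m > 0\<close> by (subst nn_integral_cmult_indicator) (auto simp: ennreal_mult)
  also have "\<dots> \<le> (\<integral>\<^sup>+z. ennreal (std_normal_density z) * indicator {x<..y} z \<partial>lborel)"
    using m_le by (intro nn_integral_mono) (auto split: split_indicator)
  also have "\<dots> = ennreal (measure std_normal_measure {x<..y})"
    by (simp add: emeasure_density std_normal.emeasure_eq_measure[symmetric])
  finally have "m * (y - x) \<le> measure std_normal_measure {x<..y}"
    by (simp add: ennreal_le_iff2) (use measure_nonneg[of std_normal_measure "{x<..y}"] in linarith)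
  moreover have "m * (y - x) > 0" using \<open>m > 0\<close> \<open>x < y\<close> by simp
  ultimately show "Phi x < Phi y"
    unfolding Phi_eq_cdf using std_normal.cdf_diff_eq[OF \<open>x < y\<close>] by simp
qed

lemma exists_gt_Phi_less:
  assumes "Phi a < d"
  shows "\<exists>y > a. Phi y < d"
proof -
  have "(Phi \<longlongrightarrow> Phi a) (at_right a)"
    using std_normal.cdf_is_right_cont[of a] unfolding Phi_eq_cdf continuous_within by simp
  then have "eventually (\<lambda>y. Phi y < d) (at_right a)"
    using assms by (rule order_tendstoD)
  then obtain b where "b > a" and b: "\<And>y. a < y \<Longrightarrow> y < b \<Longrightarrow> Phi y < d"
    unfolding eventually_at_right[of a "a + 1", OF less_add_one] by auto
  then show ?thesis using b[of "(a + b) / 2"] by (intro exI[of _ "(a + b) / 2"]) auto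
qed

section \<open>Linear functionals of a normal vector\<close>

lemma borel_measurable_quadratic_form [measurable]:
  "(\<lambda>y::real^'n. y \<bullet> (P *v y)) \<in> borel_measurable borel"
  by (intro borel_measurable_continuous_onI continuous_intros)

lemma nn_integral_exp_rescale_std_normal:
  fixes s :: real and \<psi> :: "real \<Rightarrow> ennreal"
  assumes "s > 0" and [measurable]: "\<psi> \<in> borel_measurable borel"
  shows "(\<integral>\<^sup>+t. ennreal (exp (- (1/s) * t^2 / 2)) * \<psi> t \<partial>lborel)
    = ennreal (sqrt s * sqrt (2 * pi)) * (\<integral>\<^sup>+z. ennreal (std_normal_density z) * \<psi> (sqrt s * z) \<partial>lborel)"
proof -
  have "sqrt s \<noteq> 0" using \<open>s > 0\<close> by simp
  have integrand: "exp (- (1/s) * (0 + sqrt s * z)^2 / 2) = sqrt (2 * pi) * std_normal_density z" for z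
    using \<open>s > 0\<close> by (simp add: std_normal_density_def power_mult_distrib)
  have "(\<integral>\<^sup>+t. ennreal (exp (- (1/s) * t^2 / 2)) * \<psi> t \<partial>lborel)
      = ennreal \<bar>sqrt s\<bar> * (\<integral>\<^sup>+z. ennreal (exp (- (1/s) * (0 + sqrt s * z)^2 / 2)) * \<psi> (0 + sqrt s * z) \<partial>lborel)"
    by (rule nn_integral_real_affine[OF _ \<open>sqrt s \<noteq> 0\<close>]) measurable
  also have "\<dots> = ennreal (sqrt s) * (\<integral>\<^sup>+z. ennreal (sqrt (2 * pi)) * (ennreal (std_normal_density z) * \<psi> (sqrt s * z)) \<partial>lborel)"
    unfolding integrand using \<open>s > 0\<close> by (simp add: ennreal_mult mult.assoc)
  also have "\<dots> = ennreal (sqrt s) * (ennreal (sqrt (2 * pi)) * (\<integral>\<^sup>+z. ennreal (std_normal_density z) * \<psi> (sqrt s * z) \<partial>lborel))"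
    by (subst nn_integral_cmult) simp_all
  finally show ?thesis using \<open>s > 0\<close> by (simp add: ennreal_mult mult.assoc)
qed

lemma nn_integral_mvn_density_centered:
  fixes S :: "real^'n^'n" and mu :: "real^'n" and G :: "real^'n \<Rightarrow> ennreal"
  assumes [measurable]: "G \<in> borel_measurable borel"
  shows "(\<integral>\<^sup>+x. ennreal (mvn_density mu S x) * G x \<partial>lborel)
    = ennreal (1 / sqrt ((2 * pi) ^ CARD('n) * det S))
      * (\<integral>\<^sup>+y. ennreal (exp (- (y \<bullet> (matrix_inv S *v y)) / 2)) * G (mu + y) \<partial>lborel)"
proof -
  define K where "K = ennreal (1 / sqrt ((2 * pi) ^ CARD('n) * det S))"
  have density: "ennreal (mvn_density mu S (mu + y)) = ennreal (exp (- (y \<bullet> (matrix_inv S *v y)) / 2)) * K"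
    for y
  proof -
    have "mvn_density mu S (mu + y)
        = exp (- (y \<bullet> (matrix_inv S *v y)) / 2) * (1 / sqrt ((2 * pi) ^ CARD('n) * det S))"
      unfolding mvn_density_def by simp
    then show ?thesis unfolding K_def by (simp only: ennreal_mult'[OF exp_ge_zero])
  qed
  have "(\<integral>\<^sup>+x. ennreal (mvn_density mu S x) * G x \<partial>lborel)
      = (\<integral>\<^sup>+x. ennreal (mvn_density mu S x) * G x \<partial>(distr lborel borel ((+) mu)))"
    by (simp add: lborel_distr_plus)
  also have "\<dots> = (\<integral>\<^sup>+y. ennreal (mvn_density mu S (mu + y)) * G (mu + y) \<partial>lborel)"
    by (rule nn_integral_distr) (auto simp: mvn_density_def)
  also have "\<dots> = (\<integral>\<^sup>+y. K * (ennreal (exp (- (y \<bullet> (matrix_inv S *v y)) / 2)) * G (mu + y)) \<partial>lborel)"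
    unfolding density by (simp add: mult_ac)
  also have "\<dots> = K * (\<integral>\<^sup>+y. ennreal (exp (- (y \<bullet> (matrix_inv S *v y)) / 2)) * G (mu + y) \<partial>lborel)"
    by (rule nn_integral_cmult) simp
  finally show ?thesis unfolding K_def .
qed

lemma nn_integral_mvn_density_inner_proportional:
  fixes S :: "real^'n^'n" and mu e :: "real^'n"
  assumes S: "sym_pos_def_mat S" and e: "e \<noteq> 0"
  shows "\<exists>D. \<forall>\<phi>::real\<Rightarrow>ennreal. \<phi> \<in> borel_measurable borel \<longrightarrow>
    (\<integral>\<^sup>+x. ennreal (mvn_density mu S x) * \<phi> (x \<bullet> e) \<partial>lborel)
     = D * (\<integral>\<^sup>+z. ennreal (std_normal_density z) * \<phi> (mu \<bullet> e + sqrt (e \<bullet> (S *v e)) * z) \<partial>lborel)"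
proof -
  define s where "s = e \<bullet> (S *v e)"
  define u where "u = (1/s) *\<^sub>R (S *v e)"
  define Q where "Q = (\<lambda>y::real^'n. y \<bullet> (matrix_inv S *v y))"
  have "s > 0" unfolding s_def using sym_pos_def_mat_pos[OF S e] .
  have Q[measurable]: "Q \<in> borel_measurable borel" unfolding Q_def by measurable
  have ue: "u \<bullet> e = 1"
    using inv_quadratic_form_split(1)[OF S e] unfolding s_def u_def .
  have split: "Q y = (1/s) * (y \<bullet> e)^2 + Q (y - (y \<bullet> e) *\<^sub>R u)" for y
    using inv_quadratic_form_split(2)[OF S e] unfolding s_def u_def Q_def .
  obtain C where C: "\<And>\<phi>::real\<Rightarrow>ennreal. \<phi> \<in> borel_measurable borel \<Longrightarrow>
     (\<integral>\<^sup>+y. ennreal (exp (- Q y / 2)) * \<phi> (y \<bullet> e) \<partial>lborel)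
       = C * (\<integral>\<^sup>+t. ennreal (exp (- (1/s) * t^2 / 2)) * \<phi> t \<partial>lborel)"
    using nn_integral_exp_quadratic_marginal[OF Q split ue] by blast
  define K where "K = ennreal (1 / sqrt ((2 * pi) ^ CARD('n) * det S))"
  show ?thesis
  proof (intro exI allI impI)
    fix \<phi> :: "real \<Rightarrow> ennreal" assume [measurable]: "\<phi> \<in> borel_measurable borel"
    define \<phi>' where "\<phi>' = (\<lambda>t. \<phi> (mu \<bullet> e + t))"
    have \<phi>'[measurable]: "\<phi>' \<in> borel_measurable borel" unfolding \<phi>'_def by measurable
    have "(\<integral>\<^sup>+x. ennreal (mvn_density mu S x) * \<phi> (x \<bullet> e) \<partial>lborel)
        = K * (\<integral>\<^sup>+y. ennreal (exp (- Q y / 2)) * \<phi>' (y \<bullet> e) \<partial>lborel)"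
      unfolding nn_integral_mvn_density_centered[of "\<lambda>x. \<phi> (x \<bullet> e)", simplified] K_def Q_def \<phi>'_def
      by (simp add: inner_add_left)
    also have "\<dots> = K * (C * (ennreal (sqrt s * sqrt (2 * pi))
        * (\<integral>\<^sup>+z. ennreal (std_normal_density z) * \<phi>' (sqrt s * z) \<partial>lborel)))"
      by (simp only: C[OF \<phi>'] nn_integral_exp_rescale_std_normal[OF \<open>s > 0\<close> \<phi>'])
    finally show "(\<integral>\<^sup>+x. ennreal (mvn_density mu S x) * \<phi> (x \<bullet> e) \<partial>lborel)
     = (K * C * ennreal (sqrt s * sqrt (2 * pi)))
       * (\<integral>\<^sup>+z. ennreal (std_normal_density z) * \<phi> (mu \<bullet> e + sqrt (e \<bullet> (S *v e)) * z) \<partial>lborel)"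
      unfolding \<phi>'_def s_def by (simp add: mult_ac)
  qed
qed

text \<open>The normalisation hypothesis pins down the constant of proportionality without computing
  a Gaussian integral in dimension \<open>CARD('n)\<close>; below it is supplied by the distribution of \<open>Z\<close>.\<close>

lemma nn_integral_mvn_density_inner:
  fixes S :: "real^'n^'n" and mu e :: "real^'n" and \<phi> :: "real \<Rightarrow> ennreal"
  assumes S: "sym_pos_def_mat S" and "e \<noteq> 0"
    and normalised: "(\<integral>\<^sup>+x. ennreal (mvn_density mu S x) \<partial>lborel) = 1"
    and "\<phi> \<in> borel_measurable borel"
  shows "(\<integral>\<^sup>+x. ennreal (mvn_density mu S x) * \<phi> (x \<bullet> e) \<partial>lborel)
     = (\<integral>\<^sup>+z. ennreal (std_normal_density z) * \<phi> (mu \<bullet> e + sqrt (e \<bullet> (S *v e)) * z) \<partial>lborel)"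
proof -
  obtain D where D: "\<And>\<phi>::real\<Rightarrow>ennreal. \<phi> \<in> borel_measurable borel \<Longrightarrow>
    (\<integral>\<^sup>+x. ennreal (mvn_density mu S x) * \<phi> (x \<bullet> e) \<partial>lborel)
     = D * (\<integral>\<^sup>+z. ennreal (std_normal_density z) * \<phi> (mu \<bullet> e + sqrt (e \<bullet> (S *v e)) * z) \<partial>lborel)"
    using nn_integral_mvn_density_inner_proportional[OF S \<open>e \<noteq> 0\<close>] by blast
  have "1 = D * (\<integral>\<^sup>+z. ennreal (std_normal_density z) \<partial>lborel)"
    using normalised D[of "\<lambda>_. 1"] by simp
  also have "(\<integral>\<^sup>+z. ennreal (std_normal_density z) \<partial>lborel) = 1"
    using std_normal.emeasure_space_1 by (simp add: emeasure_density)
  finally have "D = 1" by simp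
  then show ?thesis using D[OF \<open>\<phi> \<in> borel_measurable borel\<close>] by simp
qed

definition standardized_threshold :: "real^'n^'n \<Rightarrow> real^'n \<Rightarrow> real \<Rightarrow> real^'n \<Rightarrow> real" where
  "standardized_threshold S mu alpha e = (alpha - mu \<bullet> e) / sqrt (e \<bullet> (S *v e))"

lemma prob_inner_ge_mvn:
  fixes M :: "'a measure" and Z :: "'a \<Rightarrow> real^'n" and S :: "real^'n^'n" and mu e :: "real^'n"
  assumes "prob_space M" and S: "sym_pos_def_mat S" and "e \<noteq> 0"
    and Z: "distributed M lborel Z (\<lambda>x. ennreal (mvn_density mu S x))"
  shows "measure M {\<omega> \<in> space M. Z \<omega> \<bullet> e \<ge> alpha} = 1 - Phi (standardized_threshold S mu alpha e)"
proof -
  interpret M: prob_space M by fact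
  define \<sigma> where "\<sigma> = sqrt (e \<bullet> (S *v e))"
  define t where "t = standardized_threshold S mu alpha e"
  have "\<sigma> > 0" unfolding \<sigma>_def using sym_pos_def_mat_pos[OF S \<open>e \<noteq> 0\<close>] by simp
  have "(\<integral>\<^sup>+x. ennreal (mvn_density mu S x) \<partial>lborel) = emeasure M (Z -` UNIV \<inter> space M)"
    using distributed_emeasure[OF Z, of UNIV] by simp
  then have normalised: "(\<integral>\<^sup>+x. ennreal (mvn_density mu S x) \<partial>lborel) = 1"
    by (simp add: M.emeasure_space_1)
  have "alpha \<le> mu \<bullet> e + \<sigma> * z \<longleftrightarrow> t \<le> z" for z
    using \<open>\<sigma> > 0\<close> unfolding t_def standardized_threshold_def \<sigma>_def[symmetric]
    by (simp add: divide_le_eq algebra_simps)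
  then have threshold: "indicator {alpha..} (mu \<bullet> e + \<sigma> * z) = (indicator {t..} z :: ennreal)" for z
    by (simp split: split_indicator)
  have "emeasure M {\<omega> \<in> space M. Z \<omega> \<bullet> e \<ge> alpha} = emeasure M (Z -` {x. alpha \<le> x \<bullet> e} \<inter> space M)"
    by (intro arg_cong[where f="emeasure M"]) auto
  also have "\<dots> = (\<integral>\<^sup>+x. ennreal (mvn_density mu S x) * indicator {alpha..} (x \<bullet> e) \<partial>lborel)"
    by (subst distributed_emeasure[OF Z]) (auto intro!: nn_integral_cong split: split_indicator)
  also have "\<dots> = (\<integral>\<^sup>+z. ennreal (std_normal_density z) * indicator {t..} z \<partial>lborel)"
    using nn_integral_mvn_density_inner[OF S \<open>e \<noteq> 0\<close> normalised, of "indicator {alpha..}"]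
    unfolding \<sigma>_def[symmetric] threshold by simp
  also have "\<dots> = emeasure std_normal_measure {t..}"
    by (simp add: emeasure_density)
  finally show ?thesis
    unfolding t_def measure_def by (simp add: measure_std_normal_atLeast[symmetric] measure_def)
qed

lemma abs_inner_le_inv_sqrt_norm:
  fixes S :: "real^'n^'n" and mu e :: "real^'n"
  assumes S: "sym_pos_def_mat S"
  shows "\<bar>mu \<bullet> e\<bar> \<le> inv_sqrt_norm S mu * sqrt (e \<bullet> (S *v e))"
proof -
  define a where "a = matrix_inv S *v mu"
  have Sa: "S *v a = mu" unfolding a_def by (rule sym_pos_def_mat_matrix_inv(1)[OF S])
  have "mu \<bullet> e = a \<bullet> (S *v e)"
    using sym_pos_def_mat_symmetric[OF S, of a e] Sa by (simp add: inner_commute)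
  moreover have "a \<bullet> (S *v a) = mu \<bullet> (matrix_inv S *v mu)"
    unfolding Sa by (simp add: a_def inner_commute)
  ultimately have "(mu \<bullet> e)^2 \<le> (mu \<bullet> (matrix_inv S *v mu)) * (e \<bullet> (S *v e))"
    using sym_pos_def_mat_cauchy_schwarz[OF S, of a e] by simp
  then have "sqrt ((mu \<bullet> e)^2) \<le> sqrt ((mu \<bullet> (matrix_inv S *v mu)) * (e \<bullet> (S *v e)))"
    by (rule real_sqrt_le_mono)
  then show ?thesis
    unfolding inv_sqrt_norm_def using sym_pos_def_mat_inv_nonneg[OF S, of mu]
    by (simp add: real_sqrt_mult)
qed

lemma standardized_threshold_gt:
  fixes S :: "real^'n^'n" and mu e :: "real^'n"
  assumes S: "sym_pos_def_mat S" and "e \<noteq> 0" and "alpha > 0"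
  shows "standardized_threshold S mu alpha e > - inv_sqrt_norm S mu"
proof -
  have "e \<bullet> (S *v e) > 0" using sym_pos_def_mat_pos[OF S \<open>e \<noteq> 0\<close>] .
  moreover have "alpha - mu \<bullet> e > - inv_sqrt_norm S mu * sqrt (e \<bullet> (S *v e))"
    using abs_inner_le_inv_sqrt_norm[OF S, of mu e] \<open>alpha > 0\<close> by linarith
  ultimately show ?thesis
    unfolding standardized_threshold_def by (simp add: less_divide_eq)
qed

text \<open>Equality in Cauchy-Schwarz holds along \<open>e = matrix_inv S *v mu\<close>; scaling \<open>e\<close> up makes the
  contribution of \<open>alpha\<close> to the threshold vanish.\<close>

lemma standardized_threshold_approx:
  fixes S :: "real^'n^'n" and mu :: "real^'n"
  assumes S: "sym_pos_def_mat S" and "alpha > 0" and "y > - inv_sqrt_norm S mu"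
  shows "\<exists>e. e \<noteq> 0 \<and> standardized_threshold S mu alpha e < y"
proof -
  let ?P = "matrix_inv S"
  define m where "m = inv_sqrt_norm S mu"
  have "m \<ge> 0"
    unfolding m_def inv_sqrt_norm_def using sym_pos_def_mat_inv_nonneg[OF S, of mu] by simp
  obtain e0 where "e0 \<noteq> 0" and e0: "mu \<bullet> e0 = m * sqrt (e0 \<bullet> (S *v e0))"
  proof (cases "mu = 0")
    case True
    then show ?thesis
      by (intro that[of "axis undefined 1"]) (auto simp: axis_eq_0_iff m_def inv_sqrt_norm_def)
  next
    case False
    then have "?P *v mu \<noteq> 0" using sym_pos_def_mat_matrix_inv(1)[OF S, of mu] by auto
    moreover have "(?P *v mu) \<bullet> (S *v (?P *v mu)) = mu \<bullet> (?P *v mu)"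
      by (simp add: sym_pos_def_mat_matrix_inv(1)[OF S] inner_commute)
    then have "mu \<bullet> (?P *v mu) = m * sqrt ((?P *v mu) \<bullet> (S *v (?P *v mu)))"
      using sym_pos_def_mat_inv_nonneg[OF S, of mu]
      by (simp add: m_def inv_sqrt_norm_def real_sqrt_mult_self)
    ultimately show ?thesis by (rule that)
  qed
  define s0 where "s0 = sqrt (e0 \<bullet> (S *v e0))"
  have "s0 > 0" unfolding s0_def using sym_pos_def_mat_pos[OF S \<open>e0 \<noteq> 0\<close>] by simp
  have "y + m > 0" using \<open>y > - inv_sqrt_norm S mu\<close> unfolding m_def by simp
  define l where "l = 2 * alpha / (s0 * (y + m))"
  have "l > 0" unfolding l_def using \<open>alpha > 0\<close> \<open>s0 > 0\<close> \<open>y + m > 0\<close> by simp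
  have "sqrt ((l *\<^sub>R e0) \<bullet> (S *v (l *\<^sub>R e0))) = l * s0"
    unfolding s0_def using \<open>l > 0\<close>
    by (simp add: matrix_vector_mult_scaleR real_sqrt_mult power2_eq_square[symmetric])
  moreover have "mu \<bullet> (l *\<^sub>R e0) = l * m * s0" unfolding s0_def using e0 by simp
  ultimately have "standardized_threshold S mu alpha (l *\<^sub>R e0) = alpha / (l * s0) - m"
    unfolding standardized_threshold_def using \<open>l > 0\<close> \<open>s0 > 0\<close> by (simp add: field_simps)
  also have "\<dots> = (y + m) / 2 - m"
    unfolding l_def using \<open>alpha > 0\<close> \<open>s0 > 0\<close> \<open>y + m > 0\<close> by (simp add: field_simps)
  also have "\<dots> < y" using \<open>y + m > 0\<close> \<open>m \<ge> 0\<close> by simp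
  finally show ?thesis using \<open>l > 0\<close> \<open>e0 \<noteq> 0\<close> by (intro exI[of _ "l *\<^sub>R e0"]) simp
qed

theorem lemma5:
  fixes M :: "'a measure" and Z :: "'a \<Rightarrow> real^'n"
    and mu :: "real^'n" and Sigma :: "real^'n^'n"
    and alpha delta :: real
  assumes "prob_space M"
    and "sym_pos_def_mat Sigma"
    and "alpha > 0"
    and "0 < delta" and "delta < 1"
    and "distributed M lborel Z (\<lambda>x. ennreal (mvn_density mu Sigma x))"
  shows "{e :: real^'n. measure M {\<omega> \<in> space M. Z \<omega> \<bullet> e \<ge> alpha} \<ge> 1 - delta} \<noteq> {}
           \<longleftrightarrow> delta > Phi (- inv_sqrt_norm Sigma mu)"
proof -
  note S = assms(2) and alpha = assms(3)
  let ?t = "standardized_threshold Sigma mu alpha" and ?m = "inv_sqrt_norm Sigma mu"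
  have feasible_iff: "measure M {\<omega> \<in> space M. Z \<omega> \<bullet> e \<ge> alpha} \<ge> 1 - delta \<longleftrightarrow> e \<noteq> 0 \<and> Phi (?t e) \<le> delta"
    for e
    using prob_inner_ge_mvn[OF assms(1,2) _ assms(6), of e alpha] alpha \<open>delta < 1\<close>
    by (cases "e = 0") auto
  show ?thesis
  proof
    assume "{e. measure M {\<omega> \<in> space M. Z \<omega> \<bullet> e \<ge> alpha} \<ge> 1 - delta} \<noteq> {}"
    then obtain e where "e \<noteq> 0" "Phi (?t e) \<le> delta" using feasible_iff by auto
    moreover have "Phi (- ?m) < Phi (?t e)"
      using strict_monoD[OF Phi_strict_mono standardized_threshold_gt[OF S \<open>e \<noteq> 0\<close> alpha]] .
    ultimately show "delta > Phi (- ?m)" by simp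
  next
    assume "delta > Phi (- ?m)"
    then obtain y where "y > - ?m" "Phi y < delta" using exists_gt_Phi_less by blast
    moreover obtain e where "e \<noteq> 0" "?t e < y"
      using standardized_threshold_approx[OF S alpha \<open>y > - ?m\<close>] by blast
    ultimately have "e \<noteq> 0 \<and> Phi (?t e) \<le> delta"
      using strict_mono_less[OF Phi_strict_mono, of "?t e" y] by simp
    then show "{e. measure M {\<omega> \<in> space M. Z \<omega> \<bullet> e \<ge> alpha} \<ge> 1 - delta} \<noteq> {}"
      using feasible_iff by blast
  qed
qed

end
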